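(* Let $a_1,a_2,b$ be nonzero real numbers and $q\in[1,+\infty)$. Consider the scalar control system $$y(t)=a_1y(t-1)+a_2y(t-\pi)+\int_0^{\pi}y(t-\tau)\,d\tau+bu(t),\qquad t\ge0.$$ Then this system is $L^q$ approximately controllable in time $T$ for every $T>2\pi$.
   Context: For $T\ge 0$, $\phi\in L^q([-\pi,0],\mathbb{R})$ and $u\in L^q([0,T],\mathbb{R})$ there is a unique $y\in L^q([-\pi,T],\mathbb{R})$ equal to $\phi$ on $[-\pi,0]$ and satisfying the equation a.e. on $[0,T]$; $y_t(\theta):=y(t+\theta)$ for $\theta\in[-\pi,0]$. The system is $L^q$ approximately controllable in time $T>0$ if for every $\phi,\psi\in L^q([-\pi,0],\mathbb{R})$ and $\epsilon>0$ there exists $u\in L^q([0,T],\mathbb{R})$ with $\|y_T-\psi\|_{L^q([-\pi,0])}<\epsilon$. *)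

theory Defs
  imports "HOL-Analysis.Analysis"
begin

definition Lq_on :: "real \<Rightarrow> real set \<Rightarrow> (real \<Rightarrow> real) \<Rightarrow> bool" where
  "Lq_on q A f \<longleftrightarrow> set_borel_measurable lebesgue A f \<and>
                     set_integrable lebesgue A (\<lambda>x. \<bar>f x\<bar> powr q)"

definition Lq_norm :: "real \<Rightarrow> real set \<Rightarrow> (real \<Rightarrow> real) \<Rightarrow> real" where
  "Lq_norm q A f = (set_lebesgue_integral lebesgue A (\<lambda>x. \<bar>f x\<bar> powr q)) powr (1 / q)"

definition is_solution ::
  "real \<Rightarrow> real \<Rightarrow> real \<Rightarrow> real \<Rightarrow> real \<Rightarrow> (real \<Rightarrow> real) \<Rightarrow> (real \<Rightarrow> real) \<Rightarrow> (real \<Rightarrow> real) \<Rightarrow> bool"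
  where
  "is_solution q a1 a2 b T phi u y \<longleftrightarrow>
     Lq_on q {-pi..T} y \<and>
     (\<forall>t\<in>{-pi..0}. y t = phi t) \<and>
     (AE t in lebesgue. t \<in> {0..T} \<longrightarrow>
        y t = a1 * y (t - 1) + a2 * y (t - pi)
              + set_lebesgue_integral lebesgue {0..pi} (\<lambda>\<tau>. y (t - \<tau>)) + b * u t)"

definition Lq_approx_controllable ::
  "real \<Rightarrow> real \<Rightarrow> real \<Rightarrow> real \<Rightarrow> real \<Rightarrow> bool" where
  "Lq_approx_controllable q a1 a2 b T \<longleftrightarrow>
     (\<forall>phi psi \<epsilon>. Lq_on q {-pi..0} phi \<longrightarrow> Lq_on q {-pi..0} psi \<longrightarrow> \<epsilon> > 0 \<longrightarrow>
        (\<exists>u. Lq_on q {0..T} u \<and>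
             (\<exists>y. is_solution q a1 a2 b T phi u y) \<and>
             (\<forall>y. is_solution q a1 a2 b T phi u y \<longrightarrow>
                  Lq_norm q {-pi..0} (\<lambda>\<theta>. y (T + \<theta>) - psi \<theta>) < \<epsilon>)))"

end

theory Submission
  imports Defs
begin

text \<open>
  The system is even exactly controllable in every time T > pi. Since b \<noteq> 0 the equation can be solved for u:
  prescribe the trajectory y as phi on [-pi, 0], as the shifted target psi(t - T) on
  [T - pi, T] (disjoint from [-pi, 0] because T > pi) and as 0 in between, and define u by
  the equation. This u lies in L^q, because translates of L^q functions do and the
  distributed term t \<mapsto> int_{t-pi}^t y is continuous.

  It remains to see that every solution for this control agrees with y almost everywhere.
  The difference w of two solutions vanishes for t \<le> 0. If it vanishes a.e. up to s, then
  on J = [s, s + 1/2] both point delays reach below s, so |w(t)| \<le> int_J |w| on J;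
  integrating over J gives int_J |w| \<le> 1/2 int_J |w|, so w vanishes a.e. up to s + 1/2.
\<close>

section \<open>L^q functions on the real line\<close>

lemma Lq_on_UNIV_iff:
  "Lq_on q UNIV f \<longleftrightarrow> f \<in> borel_measurable lebesgue \<and> integrable lebesgue (\<lambda>x. \<bar>f x\<bar> powr q)"
  by (simp add: Lq_on_def set_borel_measurable_def set_integrable_def)

lemma Lq_on_cong:
  assumes "Lq_on q A f" "\<And>x. x \<in> A \<Longrightarrow> f x = g x"
  shows "Lq_on q A g"
proof -
  have "(\<lambda>x. indicator A x *\<^sub>R f x) = (\<lambda>x. indicator A x *\<^sub>R g x)"
    and "(\<lambda>x. indicator A x *\<^sub>R \<bar>f x\<bar> powr q) = (\<lambda>x. indicator A x *\<^sub>R \<bar>g x\<bar> powr q)"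
    using assms(2) by (auto simp: indicator_def)
  with assms(1) show ?thesis
    unfolding Lq_on_def set_borel_measurable_def set_integrable_def by simp
qed

lemma Lq_on_restrict:
  assumes "Lq_on q UNIV f" "A \<in> sets lebesgue"
  shows "Lq_on q A f"
  using assms integrable_mult_indicator[OF assms(2), of "\<lambda>x. \<bar>f x\<bar> powr q"]
  unfolding Lq_on_UNIV_iff Lq_on_def set_borel_measurable_def set_integrable_def
  by auto

lemma Lq_on_UNIV_indicator:
  assumes "Lq_on q A f"
  shows "Lq_on q UNIV (\<lambda>x. indicator A x * f x)"
proof -
  have "(\<lambda>x. \<bar>indicator A x * f x\<bar> powr q) = (\<lambda>x. indicator A x *\<^sub>R \<bar>f x\<bar> powr q)"
    by (auto simp: indicator_def)
  with assms show ?thesis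
    unfolding Lq_on_UNIV_iff Lq_on_def set_borel_measurable_def set_integrable_def by simp
qed

lemma Lq_on_UNIV_translate:
  assumes "Lq_on q UNIV f"
  shows "Lq_on q UNIV (\<lambda>x. f (x + c))"
proof -
  have f: "f \<in> borel_measurable lebesgue" "integrable lebesgue (\<lambda>x. \<bar>f x\<bar> powr q)"
    using assms by (auto simp: Lq_on_UNIV_iff)
  have "(\<lambda>x. f (c + 1 *\<^sub>R x)) \<in> borel_measurable lebesgue"
    by (rule borel_measurable_affine[OF f(1)]) simp
  moreover have "integrable lebesgue (\<lambda>x. \<bar>f (c + 1 * x)\<bar> powr q)"
    using lebesgue_integrable_real_affine[OF f(2), of 1 c] by simp
  ultimately show ?thesis by (simp add: Lq_on_UNIV_iff add.commute)
qed

lemma abs_add_powr_le: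
  fixes a b q :: real
  assumes "q > 0"
  shows "\<bar>a + b\<bar> powr q \<le> 2 powr q * (\<bar>a\<bar> powr q + \<bar>b\<bar> powr q)"
proof -
  have "\<bar>a + b\<bar> powr q \<le> (2 * max \<bar>a\<bar> \<bar>b\<bar>) powr q"
    using assms by (intro powr_mono2) auto
  also have "\<dots> = 2 powr q * max \<bar>a\<bar> \<bar>b\<bar> powr q"
    by (simp add: powr_mult)
  also have "max \<bar>a\<bar> \<bar>b\<bar> powr q \<le> \<bar>a\<bar> powr q + \<bar>b\<bar> powr q"
    by (simp add: max_def)
  finally show ?thesis by (simp add: mult_left_mono)
qed

lemma Lq_on_UNIV_add:
  assumes "Lq_on q UNIV f" "Lq_on q UNIV g" "q > 0"
  shows "Lq_on q UNIV (\<lambda>x. f x + g x)"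
proof -
  have [measurable]: "f \<in> borel_measurable lebesgue" "g \<in> borel_measurable lebesgue"
    and "integrable lebesgue (\<lambda>x. \<bar>f x\<bar> powr q)" "integrable lebesgue (\<lambda>x. \<bar>g x\<bar> powr q)"
    using assms by (auto simp: Lq_on_UNIV_iff)
  then have "integrable lebesgue (\<lambda>x. 2 powr q * (\<bar>f x\<bar> powr q + \<bar>g x\<bar> powr q))"
    by auto
  then have "integrable lebesgue (\<lambda>x. \<bar>f x + g x\<bar> powr q)"
    by (rule Bochner_Integration.integrable_bound)
       (auto intro!: order.trans[OF _ abs_ge_self] abs_add_powr_le assms(3))
  then show ?thesis by (simp add: Lq_on_UNIV_iff)
qed

lemma Lq_on_UNIV_cmult:
  assumes "Lq_on q UNIV f"
  shows "Lq_on q UNIV (\<lambda>x. c * f x)"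
proof -
  have [measurable]: "f \<in> borel_measurable lebesgue"
    and "integrable lebesgue (\<lambda>x. \<bar>f x\<bar> powr q)"
    using assms by (auto simp: Lq_on_UNIV_iff)
  moreover have "(\<lambda>x. \<bar>c * f x\<bar> powr q) = (\<lambda>x. \<bar>c\<bar> powr q * \<bar>f x\<bar> powr q)"
    by (simp add: abs_mult powr_mult)
  ultimately show ?thesis by (simp add: Lq_on_UNIV_iff)
qed

lemma abs_le_one_plus_abs_powr:
  fixes x q :: real
  assumes "q \<ge> 1"
  shows "\<bar>x\<bar> \<le> 1 + \<bar>x\<bar> powr q"
proof (cases "\<bar>x\<bar> \<le> 1")
  case False
  then have "\<bar>x\<bar> powr 1 \<le> \<bar>x\<bar> powr q"
    using assms by (intro powr_mono) auto
  with False show ?thesis by simp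
qed (simp add: add_increasing2)

lemma Lq_on_imp_set_integrable:
  assumes "Lq_on q A f" "q \<ge> 1" "A \<in> sets lebesgue" "emeasure lebesgue A < \<infinity>"
  shows "set_integrable lebesgue A f"
proof -
  have f_meas: "(\<lambda>x. indicator A x *\<^sub>R f x) \<in> borel_measurable lebesgue"
    and "integrable lebesgue (\<lambda>x. indicator A x *\<^sub>R \<bar>f x\<bar> powr q)"
    using assms(1) by (auto simp: Lq_on_def set_integrable_def set_borel_measurable_def)
  moreover have "integrable lebesgue (indicator A :: real \<Rightarrow> real)"
    using assms(3,4) by (simp add: integrable_indicator_iff)
  ultimately have "integrable lebesgue (\<lambda>x. indicator A x + indicator A x *\<^sub>R \<bar>f x\<bar> powr q)"
    by auto
  then have "integrable lebesgue (\<lambda>x. indicator A x *\<^sub>R f x)"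
    by (rule Bochner_Integration.integrable_bound[OF _ f_meas])
       (auto intro!: abs_le_one_plus_abs_powr assms(2) simp: indicator_def)
  then show ?thesis by (simp add: set_integrable_def)
qed

lemma Lq_on_if_bounded:
  assumes "set_borel_measurable lebesgue A f" "\<And>x. x \<in> A \<Longrightarrow> \<bar>f x\<bar> \<le> K" "q > 0"
    "A \<in> sets lebesgue" "emeasure lebesgue A < \<infinity>"
  shows "Lq_on q A f"
proof -
  have [measurable]: "(\<lambda>x. indicator A x *\<^sub>R f x) \<in> borel_measurable lebesgue"
    using assms(1) by (simp add: set_borel_measurable_def)
  have f_meas: "(\<lambda>x. \<bar>indicator A x *\<^sub>R f x\<bar> powr q) \<in> borel_measurable lebesgue"
    by measurable
  have "integrable lebesgue (\<lambda>x. indicator A x *\<^sub>R K powr q)"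
    using assms(4,5) by (simp add: integrable_indicator_iff)
  then have "integrable lebesgue (\<lambda>x. \<bar>indicator A x *\<^sub>R f x\<bar> powr q)"
    by (rule Bochner_Integration.integrable_bound[OF _ f_meas])
       (use assms(3) in \<open>auto intro!: powr_mono2 assms(2) simp: indicator_def\<close>)
  moreover have "(\<lambda>x. \<bar>indicator A x *\<^sub>R f x\<bar> powr q) = (\<lambda>x. indicator A x *\<^sub>R \<bar>f x\<bar> powr q)"
    by (auto simp: indicator_def)
  ultimately show ?thesis
    using assms(1) unfolding Lq_on_def set_integrable_def by simp
qed

lemma Lq_norm_eq_0_if_AE_zero:
  assumes "AE x in lebesgue. x \<in> A \<longrightarrow> f x = 0"
  shows "Lq_norm q A f = 0"
proof -
  have "(LINT x:A|lebesgue. \<bar>f x\<bar> powr q) = 0"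
    unfolding set_lebesgue_integral_def
    by (rule integral_eq_zero_AE) (use assms in \<open>eventually_elim, simp split: split_indicator\<close>)
  then show ?thesis by (simp add: Lq_norm_def)
qed

lemma emeasure_lebesgue_Icc_finite: "emeasure lebesgue {a..b::real} < \<infinity>"
  using emeasure_lborel_cbox_finite[of a b] by (simp add: cbox_interval)

section \<open>Translates and window integrals\<close>

lemma AE_lebesgue_translate:
  assumes "AE x in lebesgue. P x"
  shows "AE x in lebesgue. P (x + c)"
proof -
  from assms obtain N where N: "N \<in> null_sets lebesgue" "{x \<in> space lebesgue. \<not> P x} \<subseteq> N"
    unfolding eventually_ae_filter by auto
  then have "negligible ((+) (-c) ` N)"
    by (intro negligible_translation) (simp add: negligible_iff_null_sets)
  then have "(+) (-c) ` N \<in> null_sets lebesgue"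
    by (simp add: negligible_iff_null_sets)
  moreover have "{x \<in> space lebesgue. \<not> P (x + c)} \<subseteq> (+) (-c) ` N"
    using N(2) by (auto intro!: image_eqI[of _ _ "_ + c"])
  ultimately show ?thesis by (rule AE_I')
qed

lemma integrable_imp_set_integrable:
  fixes f :: "'a \<Rightarrow> 'b::{banach, second_countable_topology}"
  assumes "integrable M f" "A \<in> sets M"
  shows "set_integrable M A f"
  using integrable_mult_indicator[OF assms(2,1)] by (simp add: set_integrable_def)

lemma set_lebesgue_integral_reflect:
  fixes h :: "real \<Rightarrow> real"
  shows "(LINT \<tau>:{0..r}|lebesgue. h (t - \<tau>)) = (LINT x:{t-r..t}|lebesgue. h x)"
proof -
  have "(LINT x:{t-r..t}|lebesgue. h x)
      = \<bar>-1\<bar> *\<^sub>R (\<integral>x. indicator {t-r..t} (t + -1 * x) *\<^sub>R h (t + -1 * x) \<partial>lebesgue)"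
    unfolding set_lebesgue_integral_def by (rule lebesgue_integral_real_affine) simp
  also have "\<dots> = (LINT \<tau>:{0..r}|lebesgue. h (t - \<tau>))"
    unfolding set_lebesgue_integral_def
    by (auto intro!: Bochner_Integration.integral_cong simp: indicator_def)
  finally show ?thesis by simp
qed

lemma set_integrable_reflect:
  fixes h :: "real \<Rightarrow> real"
  assumes "integrable lebesgue h"
  shows "set_integrable lebesgue {0..r} (\<lambda>\<tau>. h (t - \<tau>))"
proof -
  have "integrable lebesgue (\<lambda>x. h (t + -1 * x))"
    by (rule lebesgue_integrable_real_affine[OF assms]) simp
  then show ?thesis
    unfolding set_integrable_def by (intro integrable_mult_indicator) auto
qed

lemma set_integral_abs_mono_AE:
  fixes w :: "'a \<Rightarrow> real"
  assumes "integrable M w" "A \<in> sets M" "B \<in> sets M" "AE x in M. x \<in> A - B \<longrightarrow> w x = 0"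
  shows "(LINT x:A|M. \<bar>w x\<bar>) \<le> (LINT x:B|M. \<bar>w x\<bar>)"
  unfolding set_lebesgue_integral_def
proof (rule integral_mono_AE)
  show "integrable M (\<lambda>x. indicator A x *\<^sub>R \<bar>w x\<bar>)"
    by (intro integrable_mult_indicator integrable_abs assms(1,2))
  show "integrable M (\<lambda>x. indicator B x *\<^sub>R \<bar>w x\<bar>)"
    by (intro integrable_mult_indicator integrable_abs assms(1,3))
  show "AE x in M. indicator A x *\<^sub>R \<bar>w x\<bar> \<le> indicator B x *\<^sub>R \<bar>w x\<bar>"
    using assms(4) by eventually_elim (auto split: split_indicator)
qed

lemma continuous_on_window_integral:
  fixes y :: "real \<Rightarrow> real"
  assumes y: "integrable lebesgue y" and "r \<ge> 0"
  shows "continuous_on {a..b} (\<lambda>t. LINT \<tau>:{0..r}|lebesgue. y (t - \<tau>))"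
proof -
  define G where "G x = integral {a-r..x} y" for x
  have y_integrable_on: "y integrable_on {c..d}" for c d
    using integrable_on_subinterval[OF integrable_on_lebesgue[OF y], of c d] by simp
  have G: "continuous_on {a-r..b} G"
    unfolding G_def by (rule indefinite_integral_continuous_1[OF y_integrable_on])
  have diff_cont: "continuous_on {a..b} (\<lambda>t. G t - G (t - r))"
  proof (intro continuous_on_diff)
    show "continuous_on {a..b} G"
      by (rule continuous_on_subset[OF G]) (use \<open>r \<ge> 0\<close> in auto)
    show "continuous_on {a..b} (\<lambda>t. G (t - r))"
      by (intro continuous_on_compose2[OF G] continuous_intros) (use \<open>r \<ge> 0\<close> in auto)
  qed
  have "G t - G (t - r) = (LINT \<tau>:{0..r}|lebesgue. y (t - \<tau>))" if "t \<in> {a..b}" for t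
  proof -
    have "(LINT \<tau>:{0..r}|lebesgue. y (t - \<tau>)) = (LINT x:{t-r..t}|lebesgue. y x)"
      by (rule set_lebesgue_integral_reflect)
    also have "\<dots> = integral {t-r..t} y"
      by (rule set_lebesgue_integral_eq_integral(2))
         (unfold set_integrable_def, rule integrable_mult_indicator[OF _ y], simp)
    also have "\<dots> = G t - G (t - r)"
      using Henstock_Kurzweil_Integration.integral_combine[of "a-r" "t-r" t y]
        that \<open>r \<ge> 0\<close> y_integrable_on by (simp add: G_def)
    finally show ?thesis by simp
  qed
  then show ?thesis by (rule continuous_on_eq[OF diff_cont])
qed

lemma Lq_on_window_integral:
  fixes y :: "real \<Rightarrow> real"
  assumes "integrable lebesgue y" "r \<ge> 0" "q > 0"
  shows "Lq_on q {a..b} (\<lambda>t. LINT \<tau>:{0..r}|lebesgue. y (t - \<tau>))"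
proof -
  let ?I = "\<lambda>t. LINT \<tau>:{0..r}|lebesgue. y (t - \<tau>)"
  have cont: "continuous_on {a..b} ?I"
    using continuous_on_window_integral[OF assms(1,2)] .
  then have "?I \<in> borel_measurable (lebesgue_on {a..b})"
    by (rule continuous_imp_measurable_on_sets_lebesgue) simp
  then have "set_borel_measurable lebesgue {a..b} ?I"
    unfolding set_borel_measurable_def
    using borel_measurable_restrict_space_iff[of "{a..b}" lebesgue ?I] by simp
  moreover obtain K where "\<And>t. t \<in> {a..b} \<Longrightarrow> \<bar>?I t\<bar> \<le> K"
    using compact_imp_bounded[OF compact_continuous_image[OF cont compact_Icc]]
    unfolding bounded_real by (metis image_eqI)
  ultimately show ?thesis
    using assms(3) emeasure_lebesgue_Icc_finite by (intro Lq_on_if_bounded) auto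
qed

section \<open>Uniqueness of solutions\<close>

lemma AE_zero_if_abs_le_set_integral:
  fixes w :: "real \<Rightarrow> real"
  assumes w: "set_integrable lebesgue {a..b} w" and "b - a < 1"
    and bound: "AE t in lebesgue. t \<in> {a..b} \<longrightarrow> \<bar>w t\<bar> \<le> (LINT x:{a..b}|lebesgue. \<bar>w x\<bar>)"
  shows "AE t in lebesgue. t \<in> {a..b} \<longrightarrow> w t = 0"
proof (cases "a \<le> b")
  case True
  define M where "M = (LINT x:{a..b}|lebesgue. \<bar>w x\<bar>)"
  have w_abs: "set_integrable lebesgue {a..b} (\<lambda>x. \<bar>w x\<bar>)"
    using set_integrable_abs[OF w] .
  have "0 \<le> M"
    unfolding M_def set_lebesgue_integral_def by (rule integral_nonneg_AE) simp
  have "M \<le> (LINT x:{a..b}|lebesgue. M)"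
    unfolding M_def
    by (rule set_integral_mono_AE[OF w_abs])
       (use bound emeasure_lebesgue_Icc_finite in \<open>auto simp: set_integrable_def integrable_indicator_iff\<close>)
  also have "\<dots> = (b - a) * M"
    using True emeasure_lebesgue_Icc_finite by (simp add: set_integral_const)
  finally have "M = 0"
    using \<open>0 \<le> M\<close> \<open>b - a < 1\<close> by (smt (verit) mult_less_cancel_right2)
  then have "AE x in lebesgue. indicator {a..b} x *\<^sub>R \<bar>w x\<bar> = 0"
    using w_abs unfolding M_def set_lebesgue_integral_def set_integrable_def
    by (subst (asm) integral_nonneg_eq_0_iff_AE) auto
  then show ?thesis
    by eventually_elim (auto split: split_indicator)
qed simp

lemma homogeneous_solution_zero_step:
  fixes w :: "real \<Rightarrow> real"
  assumes w: "integrable lebesgue w" and "0 \<le> s"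
    and eq: "AE t in lebesgue. t \<in> {0..T} \<longrightarrow>
               w t = a1 * w (t - 1) + a2 * w (t - pi) + (LINT \<tau>:{0..pi}|lebesgue. w (t - \<tau>))"
    and zero: "AE t in lebesgue. t \<le> s \<and> t \<le> T \<longrightarrow> w t = 0"
  shows "AE t in lebesgue. t \<le> s + 1/2 \<and> t \<le> T \<longrightarrow> w t = 0"
proof -
  define J where "J = {s..min (s + 1/2) T}"
  \<comment> \<open>Both point delays exceed the step 1/2, so on J they only see where w already vanishes.\<close>
  have zero_1: "AE t in lebesgue. t \<le> s + 1/2 \<and> t \<le> T \<longrightarrow> w (t - 1) = 0"
    using AE_lebesgue_translate[OF zero, of "-1"] by eventually_elim auto
  have zero_pi: "AE t in lebesgue. t \<le> s + 1/2 \<and> t \<le> T \<longrightarrow> w (t - pi) = 0"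
    using AE_lebesgue_translate[OF zero, of "-pi"] by eventually_elim (use pi_gt3 in auto)
  have "AE t in lebesgue. t \<in> J \<longrightarrow> \<bar>w t\<bar> \<le> (LINT x:J|lebesgue. \<bar>w x\<bar>)"
    using eq zero_1 zero_pi
  proof eventually_elim
    case (elim t)
    show ?case
    proof
      assume "t \<in> J"
      then have t: "t \<in> {0..T}" "t \<le> s + 1/2"
        using \<open>0 \<le> s\<close> by (auto simp: J_def)
      then have "w t = (LINT \<tau>:{0..pi}|lebesgue. w (t - \<tau>))"
        using elim by auto
      also have "\<dots> = (LINT x:{t-pi..t}|lebesgue. w x)"
        by (rule set_lebesgue_integral_reflect)
      finally have "\<bar>w t\<bar> \<le> (LINT x:{t-pi..t}|lebesgue. \<bar>w x\<bar>)"
        using set_integral_norm_bound[OF integrable_imp_set_integrable[OF w]] by simp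
      also have "\<dots> \<le> (LINT x:J|lebesgue. \<bar>w x\<bar>)"
        by (rule set_integral_abs_mono_AE[OF w])
           (use zero t in \<open>auto simp: J_def elim!: eventually_mono\<close>)
      finally show "\<bar>w t\<bar> \<le> (LINT x:J|lebesgue. \<bar>w x\<bar>)" .
    qed
  qed
  then have "AE t in lebesgue. t \<in> J \<longrightarrow> w t = 0"
    unfolding J_def
    by (intro AE_zero_if_abs_le_set_integral)
       (auto intro: integrable_imp_set_integrable[OF w])
  with zero show ?thesis
    by eventually_elim (auto simp: J_def)
qed

lemma homogeneous_solution_zero:
  fixes w :: "real \<Rightarrow> real"
  assumes w: "integrable lebesgue w" and "\<And>t. t \<le> 0 \<Longrightarrow> w t = 0"
    and eq: "AE t in lebesgue. t \<in> {0..T} \<longrightarrow>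
               w t = a1 * w (t - 1) + a2 * w (t - pi) + (LINT \<tau>:{0..pi}|lebesgue. w (t - \<tau>))"
  shows "AE t in lebesgue. t \<le> T \<longrightarrow> w t = 0"
proof -
  have zero_upto: "AE t in lebesgue. t \<le> real n / 2 \<and> t \<le> T \<longrightarrow> w t = 0" for n :: nat
  proof (induction n)
    case 0
    then show ?case using assms(2) by simp
  next
    case (Suc n)
    from homogeneous_solution_zero_step[OF w _ eq Suc]
    show ?case by (simp add: add_divide_distrib add.commute)
  qed
  obtain n :: nat where "2 * T \<le> real n"
    using real_arch_simple by blast
  with zero_upto[of n] show ?thesis
    by (auto elim: eventually_mono)
qed

lemma is_solution_integrable:
  assumes "is_solution q a1 a2 b T phi u y" "q \<ge> 1"
  shows "integrable lebesgue (\<lambda>t. indicator {-pi..T} t * y t)"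
  using Lq_on_imp_set_integrable[of q "{-pi..T}" y] assms emeasure_lebesgue_Icc_finite
  by (simp add: is_solution_def set_integrable_def)

lemma is_solution_extension_eq:
  fixes y :: "real \<Rightarrow> real" and T :: real
  defines "h \<equiv> \<lambda>t. indicator {-pi..T} t * y t"
  assumes "is_solution q a1 a2 b T phi u y"
  shows "AE t in lebesgue. t \<in> {0..T} \<longrightarrow>
           h t = a1 * h (t - 1) + a2 * h (t - pi) + (LINT \<tau>:{0..pi}|lebesgue. h (t - \<tau>)) + b * u t"
proof -
  from assms(2) have "AE t in lebesgue. t \<in> {0..T} \<longrightarrow>
      y t = a1 * y (t - 1) + a2 * y (t - pi) + (LINT \<tau>:{0..pi}|lebesgue. y (t - \<tau>)) + b * u t"
    by (simp add: is_solution_def)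
  then show ?thesis
  proof eventually_elim
    case (elim t)
    show ?case
    proof
      assume t: "t \<in> {0..T}"
      then have "(LINT \<tau>:{0..pi}|lebesgue. h (t - \<tau>)) = (LINT \<tau>:{0..pi}|lebesgue. y (t - \<tau>))"
        by (intro set_lebesgue_integral_cong) (auto simp: h_def)
      with elim t pi_gt3 show "h t = a1 * h (t - 1) + a2 * h (t - pi)
          + (LINT \<tau>:{0..pi}|lebesgue. h (t - \<tau>)) + b * u t"
        by (simp add: h_def)
    qed
  qed
qed

lemma is_solution_AE_unique:
  assumes "q \<ge> 1"
    and y1: "is_solution q a1 a2 b T phi u y1" and y2: "is_solution q a1 a2 b T phi u y2"
  shows "AE t in lebesgue. t \<in> {-pi..T} \<longrightarrow> y1 t = y2 t"
proof -
  define h1 where "h1 t = indicator {-pi..T} t * y1 t" for t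
  define h2 where "h2 t = indicator {-pi..T} t * y2 t" for t
  define w where "w t = h1 t - h2 t" for t
  have h: "integrable lebesgue h1" "integrable lebesgue h2"
    unfolding h1_def h2_def using is_solution_integrable[OF _ \<open>q \<ge> 1\<close>] y1 y2 by blast+
  then have w: "integrable lebesgue w"
    unfolding w_def by simp
  have "w t = 0" if "t \<le> 0" for t
    using that y1 y2 by (auto simp: is_solution_def w_def h1_def h2_def indicator_def)
  moreover have "AE t in lebesgue. t \<in> {0..T} \<longrightarrow>
      w t = a1 * w (t - 1) + a2 * w (t - pi) + (LINT \<tau>:{0..pi}|lebesgue. w (t - \<tau>))"
    using is_solution_extension_eq[OF y1] is_solution_extension_eq[OF y2]
  proof eventually_elim
    case (elim t)
    have "(LINT \<tau>:{0..pi}|lebesgue. w (t - \<tau>))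
        = (LINT \<tau>:{0..pi}|lebesgue. h1 (t - \<tau>)) - (LINT \<tau>:{0..pi}|lebesgue. h2 (t - \<tau>))"
      unfolding w_def by (intro set_integral_diff set_integrable_reflect h)
    with elim show ?case
      by (simp add: w_def h1_def h2_def algebra_simps)
  qed
  ultimately have "AE t in lebesgue. t \<le> T \<longrightarrow> w t = 0"
    by (rule homogeneous_solution_zero[OF w])
  then show ?thesis
    by eventually_elim (auto simp: w_def h1_def h2_def)
qed

section \<open>Exact controllability\<close>

lemma exists_control_reaching_target:
  assumes "q \<ge> 1" "b \<noteq> 0" "pi < T"
    and phi: "Lq_on q {-pi..0} phi" and psi: "Lq_on q {-pi..0} psi"
  obtains u y where "Lq_on q {0..T} u" "is_solution q a1 a2 b T phi u y"
    "\<forall>\<theta>\<in>{-pi..0}. y (T + \<theta>) = psi \<theta>"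
proof -
  have "q > 0" using \<open>q \<ge> 1\<close> by simp
  define y where "y t = indicator {-pi..0} t * phi t + indicator {T-pi..T} t * psi (t - T)" for t
  define I where "I t = (LINT \<tau>:{0..pi}|lebesgue. y (t - \<tau>))" for t
  define u where "u t = (y t - a1 * y (t - 1) - a2 * y (t - pi) - I t) / b" for t
  have psi_shifted: "Lq_on q UNIV (\<lambda>t. indicator {T-pi..T} t * psi (t - T))"
    by (rule Lq_on_cong[OF Lq_on_UNIV_translate[OF Lq_on_UNIV_indicator[OF psi], of "-T"]])
       (auto simp: indicator_def)
  have y_Lq: "Lq_on q UNIV y"
    unfolding y_def by (rule Lq_on_UNIV_add[OF Lq_on_UNIV_indicator[OF phi] psi_shifted \<open>q > 0\<close>])
  have y_support: "indicator {-pi..T} t *\<^sub>R y t = y t" for t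
    using \<open>pi < T\<close> by (auto simp: y_def indicator_def)
  have y_Lq_Icc: "Lq_on q {-pi..T} y"
    by (rule Lq_on_restrict[OF y_Lq]) simp
  then have "set_integrable lebesgue {-pi..T} y"
    using \<open>q \<ge> 1\<close> emeasure_lebesgue_Icc_finite by (intro Lq_on_imp_set_integrable) simp_all
  then have y_int: "integrable lebesgue y"
    unfolding set_integrable_def y_support .
  have "Lq_on q UNIV (\<lambda>t. (1 / b) * (y t + ((- a1) * y (t + - 1) + ((- a2) * y (t + - pi)
      + (- 1) * (indicator {0..T} t * I t)))))"
    unfolding I_def
    by (intro Lq_on_UNIV_cmult Lq_on_UNIV_add Lq_on_UNIV_translate y_Lq \<open>q > 0\<close>
        Lq_on_UNIV_indicator Lq_on_window_integral y_int) simp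
  then have "Lq_on q {0..T} u"
    by (rule Lq_on_cong[OF Lq_on_restrict]) (auto simp: u_def field_simps)
  moreover have "is_solution q a1 a2 b T phi u y"
    unfolding is_solution_def
  proof (intro conjI ballI AE_I2 impI y_Lq_Icc)
    show "y t = phi t" if "t \<in> {-pi..0}" for t
      using that \<open>pi < T\<close> by (auto simp: y_def indicator_def)
    show "y t = a1 * y (t - 1) + a2 * y (t - pi) + (LINT \<tau>:{0..pi}|lebesgue. y (t - \<tau>)) + b * u t" for t
      using \<open>b \<noteq> 0\<close> by (simp add: u_def I_def)
  qed
  moreover have "\<forall>\<theta>\<in>{-pi..0}. y (T + \<theta>) = psi \<theta>"
    using \<open>pi < T\<close> by (auto simp: y_def indicator_def)
  ultimately show ?thesis by (rule that)
qed

theorem proposition16: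
  fixes a1 a2 b q :: real
  assumes "a1 \<noteq> 0" and "a2 \<noteq> 0" and "b \<noteq> 0" and "q \<ge> 1"
  shows "\<forall>T > 2 * pi. Lq_approx_controllable q a1 a2 b T"
proof (intro allI impI)
  fix T :: real
  assume "T > 2 * pi"
  then have "pi < T" using pi_gt_zero by linarith
  show "Lq_approx_controllable q a1 a2 b T"
    unfolding Lq_approx_controllable_def
  proof (intro allI impI)
    fix phi psi :: "real \<Rightarrow> real" and \<epsilon> :: real
    assume phi: "Lq_on q {-pi..0} phi" and psi: "Lq_on q {-pi..0} psi" and "\<epsilon> > 0"
    obtain u y where u: "Lq_on q {0..T} u" and y: "is_solution q a1 a2 b T phi u y"
      and target: "\<forall>\<theta>\<in>{-pi..0}. y (T + \<theta>) = psi \<theta>"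
      using exists_control_reaching_target[OF \<open>q \<ge> 1\<close> \<open>b \<noteq> 0\<close> \<open>pi < T\<close> phi psi] .
    have "Lq_norm q {-pi..0} (\<lambda>\<theta>. y' (T + \<theta>) - psi \<theta>) = 0"
      if y': "is_solution q a1 a2 b T phi u y'" for y'
    proof (rule Lq_norm_eq_0_if_AE_zero)
      have "AE t in lebesgue. t \<in> {-pi..T} \<longrightarrow> y' t = y t"
        by (rule is_solution_AE_unique[OF \<open>q \<ge> 1\<close> y' y])
      from AE_lebesgue_translate[OF this, of T]
      show "AE \<theta> in lebesgue. \<theta> \<in> {-pi..0} \<longrightarrow> y' (T + \<theta>) - psi \<theta> = 0"
        by eventually_elim (use target \<open>pi < T\<close> in \<open>auto simp: add.commute\<close>)
    qed
    with u y \<open>\<epsilon> > 0\<close> show "\<exists>u. Lq_on q {0..T} u \<and> (\<exists>y. is_solution q a1 a2 b T phi u y) \<and>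
        (\<forall>y. is_solution q a1 a2 b T phi u y \<longrightarrow> Lq_norm q {-pi..0} (\<lambda>\<theta>. y (T + \<theta>) - psi \<theta>) < \<epsilon>)"
      by auto
  qed
qed

end
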